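(* Let $M$ be a Riemann surface and let $F=\mathscr F(h,g):M\to\mathbb{CP}^3$ be a holomorphic Legendrian map, in an adapted homogeneous coordinate system, where $h,g$ are meromorphic functions on $M$ having only simple poles and $h\,dg$ is exact. Let $P=P(h)\cup P(g)$ be the union of the polar loci of $h$ and $g$. Then $F$ is an immersion if and only if $(h,g):M\setminus P\to\mathbb C^2$ is an immersion.
   Context: Let $\alpha_0=z_0dz_1-z_1dz_0+z_2dz_3-z_3dz_2$ on $\mathbb C^4$ and $\pi:\mathbb C^4\setminus\{0\}\to\mathbb{CP}^3$ the standard projection; the contact structure $\xi\subset T\mathbb{CP}^3$ is the holomorphic hyperplane bundle with $\{v: d\pi_z(v)\in\xi_{\pi(z)}\}=\ker\alpha_0(z)$. A holomorphic map into $\mathbb{CP}^3$ is Legendrian if it is tangent to $\xi$. An adapted homogeneous coordinate system is a system of homogeneous coordinates $[z_0:z_1:z_2:z_3]$ such that on the affine chart $\{z_0=1\}$ with coordinates $(z_1,z_2,z_3)$, $\xi=\ker(dz_1+z_2dz_3-z_3dz_2)$. In such coordinates, for meromorphic $h,g$ on $M$ with $h\,dg$ exact and a chosen meromorphic primitive $\int h\,dg$, $\mathscr F(h,g)=[1:\tfrac{hg}{2}-\int h\,dg: g:-\tfrac h2]$. *)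

theory Defs
  imports "HOL-Complex_Analysis.Complex_Analysis"
begin

type_synonym 'a chart = "'a set \<times> ('a \<Rightarrow> complex)"

definition riemann_surface :: "'a topology \<Rightarrow> 'a chart set \<Rightarrow> bool" where
  "riemann_surface X A \<longleftrightarrow>
     Hausdorff_space X \<and> connected_space X \<and> topspace X \<noteq> {} \<and>
     \<Union>(fst ` A) = topspace X \<and>
     (\<forall>(U,\<phi>)\<in>A. openin X U \<and> open (\<phi> ` U) \<and>
        homeomorphic_map (subtopology X U) (top_of_set (\<phi> ` U)) \<phi>) \<and>
     (\<forall>(U,\<phi>)\<in>A. \<forall>(V,\<psi>)\<in>A. (\<psi> \<circ> inv_into U \<phi>) holomorphic_on \<phi> ` (U \<inter> V))"

definition loc :: "'a chart \<Rightarrow> ('a \<Rightarrow> complex) \<Rightarrow> complex \<Rightarrow> complex" where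
  "loc c f = f \<circ> inv_into (fst c) (snd c)"

text \<open>Meromorphic function on the Riemann surface (values at non-poles are the
  holomorphic values).\<close>
definition rs_meromorphic :: "'a topology \<Rightarrow> 'a chart set \<Rightarrow> ('a \<Rightarrow> complex) \<Rightarrow> bool" where
  "rs_meromorphic X A f \<longleftrightarrow>
     (\<forall>c\<in>A. loc c f meromorphic_on (snd c ` fst c) \<and>
        (\<forall>w\<in>snd c ` fst c. \<not> is_pole (loc c f) w \<longrightarrow> loc c f analytic_on {w}))"

definition only_simple_poles :: "'a topology \<Rightarrow> 'a chart set \<Rightarrow> ('a \<Rightarrow> complex) \<Rightarrow> bool" where
  "only_simple_poles X A f \<longleftrightarrow>
     (\<forall>c\<in>A. \<forall>w\<in>snd c ` fst c. is_pole (loc c f) w \<longrightarrow> zorder (loc c f) w = -1)"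

definition pole_set :: "'a topology \<Rightarrow> 'a chart set \<Rightarrow> ('a \<Rightarrow> complex) \<Rightarrow> 'a set" where
  "pole_set X A f = {p \<in> topspace X. \<exists>c\<in>A. p \<in> fst c \<and> is_pole (loc c f) (snd c p)}"

text \<open>G is a meromorphic primitive of h dg, i.e. dG = h dg.\<close>
definition meromorphic_primitive ::
  "'a topology \<Rightarrow> 'a chart set \<Rightarrow> ('a \<Rightarrow> complex) \<Rightarrow> ('a \<Rightarrow> complex) \<Rightarrow> ('a \<Rightarrow> complex) \<Rightarrow> bool" where
  "meromorphic_primitive X A G h g \<longleftrightarrow> rs_meromorphic X A G \<and>
     (\<forall>c\<in>A. \<forall>w\<in>snd c ` fst c.
        \<not> is_pole (loc c h) w \<and> \<not> is_pole (loc c g) w \<and> \<not> is_pole (loc c G) w \<longrightarrow>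
        deriv (loc c G) w = loc c h w * deriv (loc c g) w)"

definition legF :: "('a \<Rightarrow> complex) \<Rightarrow> ('a \<Rightarrow> complex) \<Rightarrow> ('a \<Rightarrow> complex) \<Rightarrow> nat \<Rightarrow> 'a \<Rightarrow> complex" where
  "legF h g G i p = [1, h p * g p / 2 - G p, g p, - h p / 2] ! i"

text \<open>A map into CP^3 given by meromorphic homogeneous components fs 0..3 is an
  immersion at p iff near p it has a holomorphic nowhere-vanishing lift Z to
  C^4 - {0} (agreeing projectively with fs off the poles) such that Z(p) and
  Z'(p) are linearly independent (i.e. d(pi o Z) is injective at p).\<close>
definition proj_immersion_at :: "'a topology \<Rightarrow> 'a chart set \<Rightarrow> (nat \<Rightarrow> 'a \<Rightarrow> complex) \<Rightarrow> 'a \<Rightarrow> bool" where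
  "proj_immersion_at X A fs p \<longleftrightarrow>
     (\<exists>c\<in>A. p \<in> fst c \<and>
       (\<exists>W Z. open W \<and> snd c p \<in> W \<and> W \<subseteq> snd c ` fst c \<and>
          (\<forall>i<4. Z i holomorphic_on W) \<and>
          (\<forall>w\<in>W. \<exists>i<4. Z i w \<noteq> 0) \<and>
          (\<forall>w\<in>W. (\<forall>i<4. \<not> is_pole (loc c (fs i)) w) \<longrightarrow>
              (\<exists>t. t \<noteq> 0 \<and> (\<forall>i<4. Z i w = t * loc c (fs i) w))) \<and>
          (\<forall>a b. (\<forall>i<4. a * Z i (snd c p) + b * deriv (Z i) (snd c p) = 0) \<longrightarrow> a = 0 \<and> b = 0)))"

definition proj_immersion :: "'a topology \<Rightarrow> 'a chart set \<Rightarrow> (nat \<Rightarrow> 'a \<Rightarrow> complex) \<Rightarrow> bool" where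
  "proj_immersion X A fs \<longleftrightarrow> (\<forall>p\<in>topspace X. proj_immersion_at X A fs p)"

definition pair_immersion_on :: "'a topology \<Rightarrow> 'a chart set \<Rightarrow> ('a \<Rightarrow> complex) \<Rightarrow> ('a \<Rightarrow> complex) \<Rightarrow> 'a set \<Rightarrow> bool" where
  "pair_immersion_on X A h g S \<longleftrightarrow>
     (\<forall>p\<in>S. \<exists>c\<in>A. p \<in> fst c \<and>
        (deriv (loc c h) (snd c p) \<noteq> 0 \<or> deriv (loc c g) (snd c p) \<noteq> 0))"

end

theory Submission
  imports Defs
begin

text \<open>
  Away from the poles, F = legF h g G is itself a holomorphic lift whose first coordinate is 1,
  so it is immersive iff F' does not vanish; since G' = h g', we have
  F' = (0, (h'g - hg')/2, g', -h'/2), which vanishes exactly when h' = g' = 0.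
  At a pole w0 of h or g write h = a/u and g = b/u with u = w - w0 and a, b holomorphic.
  Then (hg/2 - G)' = (a'b - ab')/(2u^2), so hg/2 - G has at most a simple pole, and
  u F = (u, u (hg/2 - G), b, -a/2) is a holomorphic lift that does not vanish at w0 and whose
  first coordinate has a simple zero there; such a lift is always immersive. Hence F is an
  immersion at every pole, and elsewhere exactly where (h, g) is.
\<close>

section \<open>Simple poles\<close>

lemma analytic_at_imp_eventually_analytic:
  "f analytic_on {z} \<Longrightarrow> eventually (\<lambda>w. f analytic_on {w}) (nhds z)"
  by (metis analytic_at eventually_nhds holomorphic_on_imp_analytic_at)

lemma eventually_at_imp_eventually_nhds:
  fixes z :: "'a :: t1_space"
  assumes "eventually P (at z)"
  shows "eventually (\<lambda>w. eventually P (nhds w)) (at z)"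
proof -
  from assms obtain S where S: "open S" "z \<in> S" "\<And>x. x \<in> S \<Longrightarrow> x \<noteq> z \<Longrightarrow> P x"
    unfolding eventually_at_topological by blast
  have "eventually (\<lambda>w. w \<in> S - {z}) (at z)"
    using S by (intro eventually_at_in_open)
  then show ?thesis
  proof eventually_elim
    case (elim w)
    have "eventually (\<lambda>x. x \<in> S - {z}) (nhds w)"
      using S elim by (intro eventually_nhds_in_open) auto
    then show ?case
      by eventually_elim (use S in auto)
  qed
qed

lemma at_most_simple_pole_factor:
  fixes f :: "complex \<Rightarrow> complex"
  assumes mero: "f meromorphic_on {z}" and simple: "is_pole f z \<Longrightarrow> zorder f z = -1"
  obtains a where "a analytic_on {z}" "eventually (\<lambda>w. f w = a w / (w - z)) (at z)"
    "is_pole f z \<Longrightarrow> a z \<noteq> 0"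
proof (cases "is_pole f z")
  case True
  have iso: "isolated_singularity_at f z" and ness: "not_essential f z"
    using mero by (simp_all add: meromorphic_at_iff)
  have "\<exists>\<^sub>F w in at z. f w \<noteq> 0"
    using non_zero_neighbour_pole[OF True] by (simp add: eventually_frequently)
  from zorder_exist[OF iso ness this] obtain r where r: "r > 0"
      "zor_poly f z holomorphic_on cball z r" "zor_poly f z z \<noteq> 0"
      "\<And>w. w \<in> cball z r - {z} \<Longrightarrow> f w = zor_poly f z w * (w - z) powi -1"
    using simple[OF True] by auto
  show ?thesis
  proof (rule that)
    show "zor_poly f z analytic_on {z}"
      using r(1,2) by (meson ball_subset_cball centre_in_ball holomorphic_on_imp_analytic_at
          holomorphic_on_subset open_ball)
    have "eventually (\<lambda>w. w \<in> ball z r - {z}) (at z)"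
      using r(1) by (intro eventually_at_in_open) auto
    then show "eventually (\<lambda>w. f w = zor_poly f z w / (w - z)) (at z)"
      by eventually_elim (auto simp: r(4) power_int_minus divide_inverse)
  qed (use r in auto)
next
  case False
  have iso: "isolated_singularity_at f z"
    using mero by (simp add: meromorphic_at_iff)
  obtain c where "f \<midarrow>z\<rightarrow> c"
    using mero False by (auto simp: meromorphic_at_iff not_essential_def)
  then have ana: "remove_sings f analytic_on {z}"
    by (rule remove_sings_analytic_at[OF iso])
  show ?thesis
  proof (rule that)
    show "(\<lambda>w. (w - z) * remove_sings f w) analytic_on {z}"
      using ana by (auto intro!: analytic_intros)
    show "eventually (\<lambda>w. f w = (w - z) * remove_sings f w / (w - z)) (at z)"
      using eventually_remove_sings_eq_at[OF iso] eventually_neq_at_within[of z]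
      by eventually_elim simp
  qed (use False in auto)
qed

lemma deriv_divide_linear:
  fixes c f :: "complex \<Rightarrow> complex"
  assumes "c analytic_on {w}" "w \<noteq> z" "eventually (\<lambda>x. f x = c x / (x - z)) (nhds w)"
  shows "deriv f w = (deriv c w * (w - z) - c w) / (w - z)^2"
proof -
  have "deriv f w = deriv (\<lambda>x. c x / (x - z)) w"
    using assms(3) by (rule deriv_cong_ev) simp
  also have "\<dots> = (deriv c w * (w - z) - c w) / (w - z)^2"
    using assms(1,2) by (intro DERIV_imp_deriv)
      (auto intro!: derivative_eq_intros analytic_derivI simp: power2_eq_square)
  finally show ?thesis .
qed

lemma zorder_eq_neg1_if_deriv_at_most_double_pole:
  fixes f q :: "complex \<Rightarrow> complex"
  assumes mero: "f meromorphic_on {z}" and pole: "is_pole f z" and q: "q analytic_on {z}"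
    and deriv_eq: "eventually (\<lambda>w. deriv f w = q w / (w - z)^2) (at z)"
  shows "zorder f z = -1"
proof (rule ccontr)
  \<comment> \<open>A pole of order m \<ge> 2 of f makes (w - z)^2 f' a pole of order m - 1, but it equals q.\<close>
  assume ne: "zorder f z \<noteq> -1"
  have iso: "isolated_singularity_at f z"
    using mero by (simp add: meromorphic_at_iff)
  have "zorder f z < 0"
    by (rule isolated_pole_imp_neg_zorder[OF iso pole])
  moreover have "zorder (deriv f) z = zorder f z - 1"
    by (rule zorder_deriv[OF pole iso])
  moreover have "zorder (\<lambda>w. (w - z)^2) z = 2"
    by (rule zorder_eqI[of UNIV _ "\<lambda>_. 1"]) auto
  moreover have deriv_nz: "eventually (\<lambda>w. deriv f w \<noteq> 0) (at z)"
    using is_pole_deriv_iff[OF mero] pole non_zero_neighbour_pole by blast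
  moreover have "zorder (\<lambda>w. deriv f w * (w - z)^2) z =
                  zorder (deriv f) z + zorder (\<lambda>w. (w - z)^2) z"
    using deriv_nz mero
    by (intro zorder_mult)
       (auto intro!: meromorphic_intros eventually_frequently eventually_neq_at_within)
  ultimately have "zorder (\<lambda>w. deriv f w * (w - z)^2) z < 0"
    using ne by linarith
  moreover have "eventually (\<lambda>w. deriv f w * (w - z)^2 \<noteq> 0) (at z)"
    using deriv_nz eventually_neq_at_within[of z] by eventually_elim simp
  ultimately have "is_pole (\<lambda>w. deriv f w * (w - z)^2) z"
    using mero by (intro zorder_neg_imp_is_pole) (auto intro!: meromorphic_intros)
  moreover have "eventually (\<lambda>w. deriv f w * (w - z)^2 = q w) (at z)"
    using deriv_eq eventually_neq_at_within[of z] by eventually_elim simp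
  ultimately have "is_pole q z"
    by (rule is_pole_transform) simp
  then show False
    using analytic_at_imp_no_pole[OF q] by contradiction
qed

section \<open>Linear independence of 1-jets\<close>

definition jet_independent :: "nat \<Rightarrow> (nat \<Rightarrow> complex \<Rightarrow> complex) \<Rightarrow> complex \<Rightarrow> bool" where
  "jet_independent n Z w \<longleftrightarrow>
     (\<forall>a b. (\<forall>i<n. a * Z i w + b * deriv (Z i) w = 0) \<longrightarrow> a = 0 \<and> b = 0)"

lemma jet_independent_cong_nhds:
  assumes "\<And>i. i < n \<Longrightarrow> eventually (\<lambda>x. Z i x = Z' i x) (nhds w)"
  shows "jet_independent n Z w \<longleftrightarrow> jet_independent n Z' w"
proof -
  have "Z i w = Z' i w" "deriv (Z i) w = deriv (Z' i) w" if "i < n" for i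
    using eventually_nhds_x_imp_x[OF assms[OF that]] deriv_cong_ev[OF assms[OF that] refl]
    by simp_all
  then show ?thesis
    unfolding jet_independent_def by simp
qed

lemma jet_independent_mult_iff:
  assumes t: "t field_differentiable at w" "t w \<noteq> 0"
    and Z: "\<And>i. i < n \<Longrightarrow> Z i field_differentiable at w"
  shows "jet_independent n (\<lambda>i x. t x * Z i x) w \<longleftrightarrow> jet_independent n Z w"
proof -
  have expand: "a * (t w * Z i w) + b * deriv (\<lambda>x. t x * Z i x) w
          = (a * t w + b * deriv t w) * Z i w + (b * t w) * deriv (Z i) w" if "i < n" for i a b
    using t Z[OF that] by (simp add: algebra_simps)
  show ?thesis
  proof
    assume indep: "jet_independent n (\<lambda>i x. t x * Z i x) w"
    show "jet_independent n Z w"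
      unfolding jet_independent_def
    proof (intro allI impI)
      fix a b assume rel: "\<forall>i<n. a * Z i w + b * deriv (Z i) w = 0"
      define b' where "b' = b / t w"
      define a' where "a' = (a - b' * deriv t w) / t w"
      have coeffs: "a' * t w + b' * deriv t w = a" "b' * t w = b"
        using t(2) by (simp_all add: a'_def b'_def field_simps)
      have "\<forall>i<n. a' * (t w * Z i w) + b' * deriv (\<lambda>x. t x * Z i x) w = 0"
        using rel by (simp add: expand coeffs)
      then have "a' = 0 \<and> b' = 0"
        using indep unfolding jet_independent_def by blast
      then show "a = 0 \<and> b = 0"
        using coeffs by simp
    qed
  next
    assume indep: "jet_independent n Z w"
    show "jet_independent n (\<lambda>i x. t x * Z i x) w"
      unfolding jet_independent_def
    proof (intro allI impI)
      fix a b assume "\<forall>i<n. a * (t w * Z i w) + b * deriv (\<lambda>x. t x * Z i x) w = 0"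
      then have "\<forall>i<n. (a * t w + b * deriv t w) * Z i w + (b * t w) * deriv (Z i) w = 0"
        by (simp add: expand)
      then have "a * t w + b * deriv t w = 0 \<and> b * t w = 0"
        using indep unfolding jet_independent_def by blast
      then show "a = 0 \<and> b = 0"
        using t(2) by auto
    qed
  qed
qed

lemma jet_independent_iff_deriv_nonzero:
  assumes "k < n" "Z k w \<noteq> 0" "deriv (Z k) w = 0"
  shows "jet_independent n Z w \<longleftrightarrow> (\<exists>i<n. deriv (Z i) w \<noteq> 0)"
proof
  assume indep: "jet_independent n Z w"
  show "\<exists>i<n. deriv (Z i) w \<noteq> 0"
  proof (rule ccontr)
    assume "\<not> (\<exists>i<n. deriv (Z i) w \<noteq> 0)"
    then have "\<forall>i<n. 0 * Z i w + 1 * deriv (Z i) w = 0"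
      by simp
    then have "(1::complex) = 0"
      using indep unfolding jet_independent_def by blast
    then show False
      by simp
  qed
next
  assume "\<exists>i<n. deriv (Z i) w \<noteq> 0"
  then obtain j where j: "j < n" "deriv (Z j) w \<noteq> 0"
    by blast
  show "jet_independent n Z w"
    unfolding jet_independent_def
  proof (intro allI impI)
    fix a b assume rel: "\<forall>i<n. a * Z i w + b * deriv (Z i) w = 0"
    then have "a = 0"
      using assms rel by auto
    then show "a = 0 \<and> b = 0"
      using rel j by auto
  qed
qed

lemma jet_independent_if_simple_zero:
  assumes "k < n" "Z k w = 0" "deriv (Z k) w \<noteq> 0" "\<exists>i<n. Z i w \<noteq> 0"
  shows "jet_independent n Z w"
  unfolding jet_independent_def
proof (intro allI impI)
  fix a b assume rel: "\<forall>i<n. a * Z i w + b * deriv (Z i) w = 0"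
  then have "b = 0"
    using assms by auto
  then show "a = 0 \<and> b = 0"
    using rel assms(4) by auto
qed

lemma all_less_4: "(\<forall>i<4. P i) \<longleftrightarrow> P 0 \<and> P 1 \<and> P 2 \<and> P (3::nat)"
  by (auto simp: less_Suc_eq numeral_eq_Suc)

lemma ex_less_4: "(\<exists>i<4. P i) \<longleftrightarrow> P 0 \<or> P 1 \<or> P 2 \<or> P (3::nat)"
  by (auto simp: less_Suc_eq numeral_eq_Suc)

(* Index 1 is written Suc 0, the simp normal form of (1::nat), so that these rules fire. *)
lemma legF_components:
  "legF h g G 0 = (\<lambda>_. 1)" "legF h g G (Suc 0) = (\<lambda>p. h p * g p / 2 - G p)"
  "legF h g G 2 = g" "legF h g G 3 = (\<lambda>p. - h p / 2)"
  by (simp_all add: legF_def fun_eq_iff numeral_eq_Suc)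

lemma jet_independent_legF_iff:
  fixes h g G :: "complex \<Rightarrow> complex"
  assumes h: "h field_differentiable at w" and g: "g field_differentiable at w"
    and G: "G field_differentiable at w" and dG: "deriv G w = h w * deriv g w"
  shows "jet_independent 4 (legF h g G) w \<longleftrightarrow> deriv h w \<noteq> 0 \<or> deriv g w \<noteq> 0"
proof -
  have "((\<lambda>p. h p * g p / 2 - G p) has_field_derivative
          (deriv h w * g w + h w * deriv g w) / 2 - deriv G w) (at w)"
    using h g G by (auto intro!: derivative_eq_intros field_differentiable_derivI)
  then have d1: "deriv (legF h g G (Suc 0)) w = (deriv h w * g w - h w * deriv g w) / 2"
    unfolding legF_components dG by (auto dest: DERIV_imp_deriv simp: field_simps)
  have "((\<lambda>p. - h p / 2) has_field_derivative - deriv h w / 2) (at w)"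
    using h by (auto intro!: derivative_eq_intros field_differentiable_derivI)
  then have d3: "deriv (legF h g G 3) w = - deriv h w / 2"
    unfolding legF_components by (rule DERIV_imp_deriv)
  have "(\<exists>i<4. deriv (legF h g G i) w \<noteq> 0) \<longleftrightarrow> deriv h w \<noteq> 0 \<or> deriv g w \<noteq> 0"
    using d1 d3 by (auto simp: ex_less_4 legF_components)
  then show ?thesis
    by (subst jet_independent_iff_deriv_nonzero[of 0]) (simp_all add: legF_components)
qed

section \<open>The Legendrian map in a chart\<close>

definition has_immersive_lift :: "complex set \<Rightarrow> (nat \<Rightarrow> complex \<Rightarrow> complex) \<Rightarrow> complex \<Rightarrow> bool" where
  "has_immersive_lift V F w0 \<longleftrightarrow> (\<exists>W Z. open W \<and> w0 \<in> W \<and> W \<subseteq> V \<and>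
     (\<forall>i<4. Z i holomorphic_on W) \<and>
     (\<forall>w\<in>W. \<exists>i<4. Z i w \<noteq> 0) \<and>
     (\<forall>w\<in>W. (\<forall>i<4. \<not> is_pole (F i) w) \<longrightarrow> (\<exists>t. t \<noteq> 0 \<and> (\<forall>i<4. Z i w = t * F i w))) \<and>
     jet_independent 4 Z w0)"

lemma has_immersive_lift_iff_jet_independent:
  assumes S: "open S" "w0 \<in> S" "S \<subseteq> V"
    and F_holo: "\<And>i. i < 4 \<Longrightarrow> F i holomorphic_on S" and F0: "F 0 = (\<lambda>_. 1)"
  shows "has_immersive_lift V F w0 \<longleftrightarrow> jet_independent 4 F w0"
proof
  assume "has_immersive_lift V F w0"
  then obtain W Z where W: "open W" "w0 \<in> W" and Z_holo: "\<forall>i<4. Z i holomorphic_on W"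
    and Z_proj: "\<forall>w\<in>W. (\<forall>i<4. \<not> is_pole (F i) w) \<longrightarrow> (\<exists>t. t \<noteq> 0 \<and> (\<forall>i<4. Z i w = t * F i w))"
    and Z_jet: "jet_independent 4 Z w0"
    unfolding has_immersive_lift_def by blast
  \<comment> \<open>The first coordinate of F is 1, so every lift is Z 0 times F.\<close>
  have Z_eq: "Z i w = Z 0 w * F i w" and Z0: "Z 0 w \<noteq> 0" if "w \<in> W \<inter> S" "i < 4" for w i
  proof -
    have "\<forall>j<4. \<not> is_pole (F j) w"
    proof (intro allI impI)
      fix j :: nat assume "j < 4"
      show "\<not> is_pole (F j) w"
        using not_is_pole_holomorphic[OF S(1) _ F_holo[OF \<open>j < 4\<close>]] that(1) by blast
    qed
    moreover have "w \<in> W"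
      using that(1) by blast
    ultimately obtain t where "t \<noteq> 0" "\<forall>j<4. Z j w = t * F j w"
      using Z_proj by blast
    moreover from this have "Z 0 w = t"
      by (simp add: F0)
    ultimately show "Z i w = Z 0 w * F i w" "Z 0 w \<noteq> 0"
      using that(2) by simp_all
  qed
  have near: "eventually (\<lambda>w. w \<in> W \<inter> S) (nhds w0)"
    using W S by (intro eventually_nhds_in_open) auto
  have "jet_independent 4 Z w0 \<longleftrightarrow> jet_independent 4 (\<lambda>i w. Z 0 w * F i w) w0"
  proof (rule jet_independent_cong_nhds)
    fix i :: nat assume "i < 4"
    show "eventually (\<lambda>w. Z i w = Z 0 w * F i w) (nhds w0)"
      using near by (rule eventually_mono) (rule Z_eq[OF _ \<open>i < 4\<close>])
  qed
  also have "\<dots> \<longleftrightarrow> jet_independent 4 F w0"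
  proof (rule jet_independent_mult_iff)
    show "Z 0 field_differentiable at w0"
      using Z_holo W by (intro holomorphic_on_imp_differentiable_at[of _ W]) simp_all
    show "Z 0 w0 \<noteq> 0"
      using Z0[of w0 0] W S by simp
    show "F i field_differentiable at w0" if "i < 4" for i
      using F_holo[OF that] S by (intro holomorphic_on_imp_differentiable_at[of _ S]) simp_all
  qed
  finally show "jet_independent 4 F w0"
    using Z_jet by simp
next
  assume "jet_independent 4 F w0"
  then show "has_immersive_lift V F w0"
    unfolding has_immersive_lift_def using S F_holo F0
    by (intro exI[of _ S] exI[of _ F]) (auto intro: exI[of _ 0] exI[of _ 1])
qed

lemma has_immersive_lift_if_vanishing_lift:
  assumes V: "open V" "w0 \<in> V"
    and Z_ana: "\<And>i. i < 4 \<Longrightarrow> Z i analytic_on {w0}" and Z0: "Z 0 = (\<lambda>w. w - w0)"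
    and Z_w0: "\<exists>i<4. Z i w0 \<noteq> 0" and F_pole: "\<exists>i<4. is_pole (F i) w0"
    and Z_F: "eventually (\<lambda>w. \<forall>i<4. Z i w = (w - w0) * F i w) (at w0)"
  shows "has_immersive_lift V F w0"
proof -
  have "eventually (\<lambda>w. \<forall>i\<in>{..<4}. Z i analytic_on {w}) (nhds w0)"
    using Z_ana by (intro eventually_ball_finite) (auto intro: analytic_at_imp_eventually_analytic)
  moreover have "eventually (\<lambda>w. w \<noteq> w0 \<longrightarrow> (\<forall>i<4. Z i w = (w - w0) * F i w)) (nhds w0)"
    using Z_F by (simp add: eventually_at_filter)
  moreover have "eventually (\<lambda>w. w \<in> V) (nhds w0)"
    using V by (rule eventually_nhds_in_open)
  ultimately have "eventually (\<lambda>w. w \<in> V \<and> (\<forall>i<4. Z i analytic_on {w}) \<and>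
                     (w \<noteq> w0 \<longrightarrow> (\<forall>i<4. Z i w = (w - w0) * F i w))) (nhds w0)"
    by eventually_elim auto
  then obtain W where W: "open W" "w0 \<in> W" and W_reg: "\<forall>w\<in>W. w \<in> V \<and> (\<forall>i<4. Z i analytic_on {w}) \<and>
                     (w \<noteq> w0 \<longrightarrow> (\<forall>i<4. Z i w = (w - w0) * F i w))"
    unfolding eventually_nhds by blast
  show ?thesis
    unfolding has_immersive_lift_def
  proof (intro exI[of _ W] exI[of _ Z] conjI ballI allI impI)
    show "open W" "w0 \<in> W" "W \<subseteq> V"
      using W W_reg by auto
    show "Z i holomorphic_on W" if "i < 4" for i
      using W_reg that by (intro analytic_imp_holomorphic analytic_on_analytic_at[THEN iffD2]) blast
    show "\<exists>i<4. Z i w \<noteq> 0" if "w \<in> W" for w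
      using Z_w0 Z0 by (cases "w = w0") (auto intro: exI[of _ 0])
    show "\<exists>t. t \<noteq> 0 \<and> (\<forall>i<4. Z i w = t * F i w)" if "w \<in> W" "\<forall>i<4. \<not> is_pole (F i) w" for w
    proof -
      have "w \<noteq> w0"
        using that(2) F_pole by blast
      then show ?thesis
        using W_reg that(1) by (intro exI[of _ "w - w0"]) simp
    qed
    show "jet_independent 4 Z w0"
    proof (rule jet_independent_if_simple_zero[of 0])
      have "deriv (\<lambda>w. w - w0) w0 = 1"
        by (rule DERIV_imp_deriv) (auto intro!: derivative_eq_intros)
      then show "deriv (Z 0) w0 \<noteq> 0"
        by (simp add: Z0)
    qed (use Z0 Z_w0 in simp_all)
  qed
qed

locale legendrian_chart =
  fixes V :: "complex set" and h g G :: "complex \<Rightarrow> complex"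
  assumes open_V: "open V"
    and meromorphic: "h meromorphic_on V" "g meromorphic_on V" "G meromorphic_on V"
    and analytic_h: "\<And>w. w \<in> V \<Longrightarrow> \<not> is_pole h w \<Longrightarrow> h analytic_on {w}"
    and analytic_g: "\<And>w. w \<in> V \<Longrightarrow> \<not> is_pole g w \<Longrightarrow> g analytic_on {w}"
    and analytic_G: "\<And>w. w \<in> V \<Longrightarrow> \<not> is_pole G w \<Longrightarrow> G analytic_on {w}"
    and simple_pole_h: "\<And>w. w \<in> V \<Longrightarrow> is_pole h w \<Longrightarrow> zorder h w = -1"
    and simple_pole_g: "\<And>w. w \<in> V \<Longrightarrow> is_pole g w \<Longrightarrow> zorder g w = -1"
    and deriv_G: "\<And>w. w \<in> V \<Longrightarrow> \<not> is_pole h w \<Longrightarrow> \<not> is_pole g w \<Longrightarrow> \<not> is_pole G w \<Longrightarrow>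
                    deriv G w = h w * deriv g w"
begin

lemma meromorphic_at:
  assumes "w \<in> V"
  shows "h meromorphic_on {w}" "g meromorphic_on {w}" "G meromorphic_on {w}"
  using meromorphic assms by (auto intro: meromorphic_on_subset)

lemma eventually_analytic_and_deriv_G:
  assumes "w0 \<in> V"
  shows "eventually (\<lambda>w. h analytic_on {w} \<and> g analytic_on {w} \<and> G analytic_on {w} \<and>
                         deriv G w = h w * deriv g w) (at w0)"
proof -
  have "eventually (\<lambda>w. \<not> is_pole f w) (at w0)" if "f meromorphic_on {w0}" for f
    using that by (simp add: meromorphic_at_iff eventually_not_pole)
  then have "eventually (\<lambda>w. \<not> is_pole h w \<and> \<not> is_pole g w \<and> \<not> is_pole G w) (at w0)"
    using meromorphic_at[OF assms] by (simp add: eventually_conj_iff)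
  moreover have "eventually (\<lambda>w. w \<in> V) (at w0)"
    using open_V assms by (rule eventually_at_in_open')
  ultimately show ?thesis
    by eventually_elim (simp add: analytic_h analytic_g analytic_G deriv_G)
qed

lemma primitive_not_pole:
  assumes "w0 \<in> V" "\<not> is_pole h w0" "\<not> is_pole g w0"
  shows "\<not> is_pole G w0"
proof
  assume "is_pole G w0"
  then have "is_pole (deriv G) w0"
    using is_pole_deriv_iff meromorphic_at(3)[OF assms(1)] by blast
  moreover have "eventually (\<lambda>w. deriv G w = h w * deriv g w) (at w0)"
    using eventually_analytic_and_deriv_G[OF assms(1)] by (rule eventually_mono) simp
  ultimately have "is_pole (\<lambda>w. h w * deriv g w) w0"
    by (rule is_pole_transform) simp
  moreover have "(\<lambda>w. h w * deriv g w) analytic_on {w0}"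
    using assms by (intro analytic_intros analytic_h analytic_g)
  ultimately show False
    using analytic_at_imp_no_pole by blast
qed

lemma has_immersive_lift_iff_deriv_nonzero:
  assumes w0: "w0 \<in> V" and h0: "\<not> is_pole h w0" and g0: "\<not> is_pole g w0"
  shows "has_immersive_lift V (legF h g G) w0 \<longleftrightarrow> deriv h w0 \<noteq> 0 \<or> deriv g w0 \<noteq> 0"
proof -
  have ana: "h analytic_on {w0}" "g analytic_on {w0}" "G analytic_on {w0}"
    using analytic_h analytic_g analytic_G primitive_not_pole assms by blast+
  have "eventually (\<lambda>w. w \<in> V \<and> h analytic_on {w} \<and> g analytic_on {w} \<and> G analytic_on {w})
          (nhds w0)"
    using ana eventually_nhds_in_open[OF open_V w0]
    by (auto simp: eventually_conj_iff analytic_at_imp_eventually_analytic)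
  then obtain S where S: "open S" "w0 \<in> S"
      and S_reg: "\<forall>w\<in>S. w \<in> V \<and> h analytic_on {w} \<and> g analytic_on {w} \<and> G analytic_on {w}"
    unfolding eventually_nhds by blast
  have "\<forall>i<4. legF h g G i analytic_on {w}" if "w \<in> S" for w
    using S_reg that by (auto simp: all_less_4 legF_components intro!: analytic_intros)
  then have "legF h g G i holomorphic_on S" if "i < 4" for i
    using that by (intro analytic_imp_holomorphic analytic_on_analytic_at[THEN iffD2]) blast
  then have "has_immersive_lift V (legF h g G) w0 \<longleftrightarrow> jet_independent 4 (legF h g G) w0"
    using S S_reg by (intro has_immersive_lift_iff_jet_independent) (auto simp: legF_components)
  also have "\<dots> \<longleftrightarrow> deriv h w0 \<noteq> 0 \<or> deriv g w0 \<noteq> 0"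
    using ana by (intro jet_independent_legF_iff deriv_G w0 h0 g0 primitive_not_pole)
                 (auto intro: analytic_on_imp_differentiable_at)
  finally show ?thesis .
qed

lemma eventually_deriv_second_coordinate:
  assumes w0: "w0 \<in> V" and a: "a analytic_on {w0}" and b: "b analytic_on {w0}"
    and h_eq: "eventually (\<lambda>w. h w = a w / (w - w0)) (at w0)"
    and g_eq: "eventually (\<lambda>w. g w = b w / (w - w0)) (at w0)"
  shows "eventually (\<lambda>w. deriv (\<lambda>p. h p * g p / 2 - G p) w =
                         (deriv a w * b w - a w * deriv b w) / 2 / (w - w0)^2) (at w0)"
proof -
  have "eventually (\<lambda>w. a analytic_on {w} \<and> b analytic_on {w}) (nhds w0)"
    using a b by (simp add: eventually_conj_iff analytic_at_imp_eventually_analytic)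
  then have "eventually (\<lambda>w. a analytic_on {w} \<and> b analytic_on {w}) (at w0)"
    by (auto simp: eventually_at_filter elim: eventually_mono)
  moreover have "eventually (\<lambda>w. eventually (\<lambda>x. h x = a x / (x - w0)) (nhds w) \<and>
                                 eventually (\<lambda>x. g x = b x / (x - w0)) (nhds w)) (at w0)"
    using eventually_at_imp_eventually_nhds[OF h_eq] eventually_at_imp_eventually_nhds[OF g_eq]
    by (simp add: eventually_conj_iff)
  ultimately show ?thesis
    using eventually_analytic_and_deriv_G[OF w0] eventually_neq_at_within[of w0]
  proof eventually_elim
    case (elim w)
    have wronskian: "((A' * u - A) / u^2 * (B / u) - A / u * ((B' * u - B) / u^2)) / 2
                       = (A' * B - A * B') / 2 / u^2" if "u \<noteq> 0" for A A' B B' u :: complex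
      using that by (simp add: field_simps power2_eq_square)
    have dh: "deriv h w = (deriv a w * (w - w0) - a w) / (w - w0)^2"
      using elim by (intro deriv_divide_linear) simp_all
    have dg: "deriv g w = (deriv b w * (w - w0) - b w) / (w - w0)^2"
      using elim by (intro deriv_divide_linear) simp_all
    have hw: "h w = a w / (w - w0)" and gw: "g w = b w / (w - w0)"
      using elim by (auto dest: eventually_nhds_x_imp_x)
    have "((\<lambda>p. h p * g p / 2 - G p) has_field_derivative
            (deriv h w * g w + h w * deriv g w) / 2 - deriv G w) (at w)"
      using elim by (auto intro!: derivative_eq_intros analytic_derivI)
    then have "deriv (\<lambda>p. h p * g p / 2 - G p) w = (deriv h w * g w - h w * deriv g w) / 2"
      using elim by (auto dest: DERIV_imp_deriv simp: field_simps)
    also have "\<dots> = ((deriv a w * (w - w0) - a w) / (w - w0)^2 * (b w / (w - w0))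
                      - a w / (w - w0) * ((deriv b w * (w - w0) - b w) / (w - w0)^2)) / 2"
      by (simp only: dh dg hw gw)
    also have "\<dots> = (deriv a w * b w - a w * deriv b w) / 2 / (w - w0)^2"
      by (rule wronskian) (use elim in simp)
    finally show ?case .
  qed
qed

lemma second_coordinate_at_most_simple_pole:
  assumes w0: "w0 \<in> V" and a: "a analytic_on {w0}" and b: "b analytic_on {w0}"
    and h_eq: "eventually (\<lambda>w. h w = a w / (w - w0)) (at w0)"
    and g_eq: "eventually (\<lambda>w. g w = b w / (w - w0)) (at w0)"
  obtains c where "c analytic_on {w0}"
    "eventually (\<lambda>w. legF h g G (Suc 0) w = c w / (w - w0)) (at w0)"
proof -
  have mero: "legF h g G (Suc 0) meromorphic_on {w0}"
    unfolding legF_components using meromorphic_at[OF w0] by (auto intro!: meromorphic_intros)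
  moreover have "zorder (legF h g G (Suc 0)) w0 = -1" if "is_pole (legF h g G (Suc 0)) w0"
  proof (rule zorder_eq_neg1_if_deriv_at_most_double_pole[OF mero that])
    show "(\<lambda>w. (deriv a w * b w - a w * deriv b w) / 2) analytic_on {w0}"
      using a b by (auto intro!: analytic_intros)
  qed (unfold legF_components, rule eventually_deriv_second_coordinate[OF w0 a b h_eq g_eq])
  ultimately show ?thesis
    using at_most_simple_pole_factor that by blast
qed

lemma has_immersive_lift_at_pole:
  assumes w0: "w0 \<in> V" and pole: "is_pole h w0 \<or> is_pole g w0"
  shows "has_immersive_lift V (legF h g G) w0"
proof -
  obtain a where a: "a analytic_on {w0}" "eventually (\<lambda>w. h w = a w / (w - w0)) (at w0)"
      "is_pole h w0 \<Longrightarrow> a w0 \<noteq> 0"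
    using at_most_simple_pole_factor[OF meromorphic_at(1)[OF w0] simple_pole_h[OF w0]] by blast
  obtain b where b: "b analytic_on {w0}" "eventually (\<lambda>w. g w = b w / (w - w0)) (at w0)"
      "is_pole g w0 \<Longrightarrow> b w0 \<noteq> 0"
    using at_most_simple_pole_factor[OF meromorphic_at(2)[OF w0] simple_pole_g[OF w0]] by blast
  obtain c where c: "c analytic_on {w0}"
      "eventually (\<lambda>w. legF h g G (Suc 0) w = c w / (w - w0)) (at w0)"
    using second_coordinate_at_most_simple_pole[OF w0 a(1) b(1) a(2) b(2)] by blast
  define Z where "Z = (\<lambda>i. [\<lambda>w. w - w0, c, b, \<lambda>w. - a w / 2] ! i)"
  have Z_components: "Z 0 = (\<lambda>w. w - w0)" "Z (Suc 0) = c" "Z 2 = b" "Z 3 = (\<lambda>w. - a w / 2)"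
    by (simp_all add: Z_def numeral_eq_Suc)
  show ?thesis
  proof (rule has_immersive_lift_if_vanishing_lift[where Z = Z, OF open_V w0])
    show "Z 0 = (\<lambda>w. w - w0)"
      by (fact Z_components(1))
    have "\<forall>i<4. Z i analytic_on {w0}"
      using a(1) b(1) c(1) by (auto simp: all_less_4 Z_components intro!: analytic_intros)
    then show "Z i analytic_on {w0}" if "i < 4" for i
      using that by blast
    show "\<exists>i<4. Z i w0 \<noteq> 0"
      using pole a(3) b(3) by (auto simp: ex_less_4 Z_components)
    have "(\<lambda>p. - h p / 2) = (\<lambda>p. (- 1 / 2) * h p)"
      by (simp add: fun_eq_iff)
    then have "is_pole (\<lambda>p. - h p / 2) w0 \<longleftrightarrow> is_pole h w0"
      by (simp only:) (rule is_pole_cmult_iff, simp)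
    then show "\<exists>i<4. is_pole (legF h g G i) w0"
      using pole by (auto simp: ex_less_4 legF_components(1,3,4))
    show "eventually (\<lambda>w. \<forall>i<4. Z i w = (w - w0) * legF h g G i w) (at w0)"
      using a(2) b(2) c(2) eventually_neq_at_within[of w0]
      by eventually_elim (auto simp: all_less_4 Z_components legF_components(1,3,4) field_simps)
  qed
qed

end

section \<open>The Legendrian map on the Riemann surface\<close>

lemma loc_legF: "loc c (legF h g G i) = legF (loc c h) (loc c g) (loc c G) i"
  by (simp add: loc_def legF_def fun_eq_iff)

lemma proj_immersion_at_iff_lift:
  "proj_immersion_at X A fs p \<longleftrightarrow>
     (\<exists>c\<in>A. p \<in> fst c \<and> has_immersive_lift (snd c ` fst c) (\<lambda>i. loc c (fs i)) (snd c p))"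
  unfolding proj_immersion_at_def has_immersive_lift_def jet_independent_def by simp

lemma legendrian_chart_of_chart:
  assumes "riemann_surface X A"
    and "rs_meromorphic X A h" "only_simple_poles X A h"
    and "rs_meromorphic X A g" "only_simple_poles X A g"
    and "meromorphic_primitive X A G h g" and "c \<in> A"
  shows "legendrian_chart (snd c ` fst c) (loc c h) (loc c g) (loc c G)"
proof -
  obtain U \<phi> where c: "c = (U, \<phi>)"
    by (cases c)
  have "open (\<phi> ` U)"
    using assms(1,7) c unfolding riemann_surface_def by fastforce
  moreover have "rs_meromorphic X A G"
    using assms(6) unfolding meromorphic_primitive_def by blast
  ultimately show ?thesis
    using assms c
    unfolding legendrian_chart_def rs_meromorphic_def only_simple_poles_def
      meromorphic_primitive_def
    by auto
qed

lemma proj_immersion_at_legF_iff: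
  assumes "riemann_surface X A"
    and "rs_meromorphic X A h" "only_simple_poles X A h"
    and "rs_meromorphic X A g" "only_simple_poles X A g"
    and "meromorphic_primitive X A G h g" and p: "p \<in> topspace X"
  shows "proj_immersion_at X A (legF h g G) p \<longleftrightarrow> p \<in> pole_set X A h \<union> pole_set X A g \<or>
           (\<exists>c\<in>A. p \<in> fst c \<and> (deriv (loc c h) (snd c p) \<noteq> 0 \<or> deriv (loc c g) (snd c p) \<noteq> 0))"
proof -
  have chart: "legendrian_chart (snd c ` fst c) (loc c h) (loc c g) (loc c G)" if "c \<in> A" for c
    using legendrian_chart_of_chart[OF assms(1-6) that] .
  show ?thesis
  proof (cases "p \<in> pole_set X A h \<union> pole_set X A g")
    case True
    then obtain c where c: "c \<in> A" "p \<in> fst c"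
      "is_pole (loc c h) (snd c p) \<or> is_pole (loc c g) (snd c p)"
      unfolding pole_set_def by blast
    then have "has_immersive_lift (snd c ` fst c) (legF (loc c h) (loc c g) (loc c G)) (snd c p)"
      by (intro legendrian_chart.has_immersive_lift_at_pole[OF chart]) auto
    then show ?thesis
      using True c unfolding proj_immersion_at_iff_lift loc_legF by blast
  next
    case False
    have "has_immersive_lift (snd c ` fst c) (legF (loc c h) (loc c g) (loc c G)) (snd c p) \<longleftrightarrow>
            deriv (loc c h) (snd c p) \<noteq> 0 \<or> deriv (loc c g) (snd c p) \<noteq> 0"
      if "c \<in> A" "p \<in> fst c" for c
    proof (rule legendrian_chart.has_immersive_lift_iff_deriv_nonzero[OF chart[OF that(1)]])
      show "snd c p \<in> snd c ` fst c"
        using that(2) by (rule imageI)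
      show "\<not> is_pole (loc c h) (snd c p)" "\<not> is_pole (loc c g) (snd c p)"
        using False that p unfolding pole_set_def by blast+
    qed
    then show ?thesis
      using False unfolding proj_immersion_at_iff_lift loc_legF by blast
  qed
qed

theorem corollary2p3:
  fixes X :: "'a topology" and A :: "'a chart set"
    and h g G :: "'a \<Rightarrow> complex"
  assumes "riemann_surface X A"
    and "rs_meromorphic X A h" and "only_simple_poles X A h"
    and "rs_meromorphic X A g" and "only_simple_poles X A g"
    and "meromorphic_primitive X A G h g"
  shows "proj_immersion X A (legF h g G) \<longleftrightarrow>
         pair_immersion_on X A h g (topspace X - (pole_set X A h \<union> pole_set X A g))"
  unfolding proj_immersion_def pair_immersion_on_def
  using proj_immersion_at_legF_iff[OF assms] by blast

end
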